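(* Let $X$ be a distance-regular graph of diameter $4$ on $n$ vertices that is both bipartite and antipodal. Then $\mathrm{motion}(X)\geq 0.15\,n$.
   Context: A distance-regular graph of diameter $d$ is a connected graph such that for vertices $v,w$ at distance $i$ the numbers of neighbours of $w$ at distance $i-1,i,i+1$ from $v$ are constants depending only on $i$. It is antipodal if being at distance $d$ or equal is an equivalence relation on vertices. The motion of a graph is the minimum, over non-identity automorphisms, of the number of vertices not fixed. *)

theory Defs
  imports Main "HOL-Library.Extended_Nat"
begin

definition simple_graph :: "'a set \<Rightarrow> ('a \<Rightarrow> 'a \<Rightarrow> bool) \<Rightarrow> bool" where
  "simple_graph V E \<longleftrightarrow> finite V \<and> V \<noteq> {} \<and>
     (\<forall>u v. E u v \<longrightarrow> u \<in> V \<and> v \<in> V) \<and>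
     (\<forall>u v. E u v \<longrightarrow> E v u) \<and> (\<forall>u. \<not> E u u)"

definition is_walk :: "'a set \<Rightarrow> ('a \<Rightarrow> 'a \<Rightarrow> bool) \<Rightarrow> 'a list \<Rightarrow> bool" where
  "is_walk V E xs \<longleftrightarrow> xs \<noteq> [] \<and> set xs \<subseteq> V \<and>
     (\<forall>i. Suc i < length xs \<longrightarrow> E (xs ! i) (xs ! Suc i))"

definition connected_graph :: "'a set \<Rightarrow> ('a \<Rightarrow> 'a \<Rightarrow> bool) \<Rightarrow> bool" where
  "connected_graph V E \<longleftrightarrow> (\<forall>u\<in>V. \<forall>v\<in>V. \<exists>xs. is_walk V E xs \<and> hd xs = u \<and> last xs = v)"

definition gdist :: "'a set \<Rightarrow> ('a \<Rightarrow> 'a \<Rightarrow> bool) \<Rightarrow> 'a \<Rightarrow> 'a \<Rightarrow> nat" where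
  "gdist V E u v = (LEAST k. \<exists>xs. is_walk V E xs \<and> hd xs = u \<and> last xs = v \<and> length xs = Suc k)"

definition diameter :: "'a set \<Rightarrow> ('a \<Rightarrow> 'a \<Rightarrow> bool) \<Rightarrow> nat" where
  "diameter V E = Max {gdist V E u v | u v. u \<in> V \<and> v \<in> V}"

definition distance_regular :: "'a set \<Rightarrow> ('a \<Rightarrow> 'a \<Rightarrow> bool) \<Rightarrow> bool" where
  "distance_regular V E \<longleftrightarrow> simple_graph V E \<and> connected_graph V E \<and>
     (\<exists>c a b :: nat \<Rightarrow> nat. \<forall>v\<in>V. \<forall>w\<in>V.
        card {x \<in> V. E w x \<and> gdist V E v x + 1 = gdist V E v w} = c (gdist V E v w) \<and>
        card {x \<in> V. E w x \<and> gdist V E v x = gdist V E v w} = a (gdist V E v w) \<and>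
        card {x \<in> V. E w x \<and> gdist V E v x = gdist V E v w + 1} = b (gdist V E v w))"

definition bipartite :: "'a set \<Rightarrow> ('a \<Rightarrow> 'a \<Rightarrow> bool) \<Rightarrow> bool" where
  "bipartite V E \<longleftrightarrow> (\<exists>f :: 'a \<Rightarrow> bool. \<forall>u\<in>V. \<forall>v\<in>V. E u v \<longrightarrow> f u \<noteq> f v)"

definition antipodal :: "'a set \<Rightarrow> ('a \<Rightarrow> 'a \<Rightarrow> bool) \<Rightarrow> bool" where
  "antipodal V E \<longleftrightarrow> equiv V {(u, v). u \<in> V \<and> v \<in> V \<and> (u = v \<or> gdist V E u v = diameter V E)}"

definition automorphism :: "'a set \<Rightarrow> ('a \<Rightarrow> 'a \<Rightarrow> bool) \<Rightarrow> ('a \<Rightarrow> 'a) \<Rightarrow> bool" where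
  "automorphism V E \<sigma> \<longleftrightarrow> bij_betw \<sigma> V V \<and> (\<forall>u\<in>V. \<forall>v\<in>V. E (\<sigma> u) (\<sigma> v) \<longleftrightarrow> E u v)"

text \<open>Motion: minimum, over automorphisms that are not the identity on V, of the number of
non-fixed vertices; \<infinity> if there is no non-identity automorphism.\<close>
definition motion :: "'a set \<Rightarrow> ('a \<Rightarrow> 'a \<Rightarrow> bool) \<Rightarrow> enat" where
  "motion V E = (INF \<sigma> \<in> {\<sigma>. automorphism V E \<sigma> \<and> (\<exists>x\<in>V. \<sigma> x \<noteq> x)}.
                   enat (card {x \<in> V. \<sigma> x \<noteq> x}))"

end

theory Submission
  imports Defs
begin

text \<open>Write k = b 0 for the valency. Let \<sigma> be a non-identity automorphism; if it has no
  fixed vertex it moves all n vertices. Otherwise \<sigma> preserves the two sides of the bipartition,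
  and connectivity yields a vertex u with d u (\<sigma> u) = 2. Every vertex a of the antipodal class
  F of u then also satisfies d a (\<sigma> a) = 2, so the k - c 2 neighbours of a that are not
  neighbours of \<sigma> a are moved; as antipodal vertices have disjoint neighbourhoods, \<sigma> moves at
  least |F| (k - c 2) vertices. On the other hand the neighbourhoods of F cover the side not
  containing u, and both sides have the same size, so n \<le> 2 |F| k. Finally 2 c 2 \<le> k, since a
  vertex at distance 2 from two antipodal vertices has disjoint sets of common neighbours with
  them. Altogether \<sigma> moves at least n / 4 vertices.\<close>

lemma is_walk_iff_successively:
  "is_walk V E xs \<longleftrightarrow> xs \<noteq> [] \<and> set xs \<subseteq> V \<and> successively E xs"
  by (simp add: is_walk_def successively_conv_nth)

lemma successively_last_invariant:
  assumes "successively E xs" "xs \<noteq> []" "P (hd xs)" and step: "\<And>a b. E a b \<Longrightarrow> P a \<Longrightarrow> P b"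
  shows "P (last xs)"
  using assms(1-3)
proof (induction xs rule: induct_list012)
  case (3 x y zs)
  then have "P y" using step[of x y] by simp
  with 3 show ?case by simp
qed auto

lemma successively_parity:
  fixes f :: "'a \<Rightarrow> bool"
  assumes "successively E xs" "set xs \<subseteq> V" "xs \<noteq> []"
    and "\<forall>u\<in>V. \<forall>v\<in>V. E u v \<longrightarrow> f u \<noteq> f v"
  shows "f (hd xs) = f (last xs) \<longleftrightarrow> even (length xs - 1)"
  using assms(1-3)
proof (induction xs rule: induct_list012)
  case (3 x y zs)
  have "f x \<noteq> f y" using 3 assms(4) by auto
  moreover have "f y = f (last (y # zs)) \<longleftrightarrow> even (length zs)" using 3 by simp
  ultimately show ?case by auto
qed auto

lemma automorphism_in_vertices: "automorphism V E \<sigma> \<Longrightarrow> v \<in> V \<Longrightarrow> \<sigma> v \<in> V"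
  unfolding automorphism_def by (blast intro: bij_betw_apply)

lemma automorphism_inv_into:
  assumes "automorphism V E \<sigma>"
  shows "automorphism V E (inv_into V \<sigma>)"
proof -
  have bij: "bij_betw \<sigma> V V" and adj: "\<forall>u\<in>V. \<forall>v\<in>V. E (\<sigma> u) (\<sigma> v) \<longleftrightarrow> E u v"
    using assms by (auto simp: automorphism_def)
  have inv_bij: "bij_betw (inv_into V \<sigma>) V V"
    using bij by (rule bij_betw_inv_into)
  have "E (inv_into V \<sigma> u) (inv_into V \<sigma> v) \<longleftrightarrow> E u v" if "u \<in> V" "v \<in> V" for u v
  proof -
    have "inv_into V \<sigma> u \<in> V" "inv_into V \<sigma> v \<in> V"
      using inv_bij that by (auto intro: bij_betw_apply)
    moreover have "\<sigma> (inv_into V \<sigma> u) = u" "\<sigma> (inv_into V \<sigma> v) = v"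
      using bij that by (auto intro: bij_betw_inv_into_right)
    ultimately show ?thesis using adj by metis
  qed
  with inv_bij show ?thesis by (simp add: automorphism_def)
qed

lemma motion_attained:
  assumes "automorphism V E \<sigma>" "x \<in> V" "\<sigma> x \<noteq> x"
  obtains \<tau> where "automorphism V E \<tau>" "\<exists>y\<in>V. \<tau> y \<noteq> y"
    "motion V E = enat (card {y \<in> V. \<tau> y \<noteq> y})"
proof -
  let ?M = "(\<lambda>\<tau>. enat (card {y \<in> V. \<tau> y \<noteq> y})) ` {\<tau>. automorphism V E \<tau> \<and> (\<exists>y\<in>V. \<tau> y \<noteq> y)}"
  have "?M \<noteq> {}" using assms by blast
  then have "Inf ?M = (LEAST m. m \<in> ?M)" unfolding Inf_enat_def by (rule if_not_P)
  moreover have "(LEAST m. m \<in> ?M) \<in> ?M" using \<open>?M \<noteq> {}\<close> by (rule LeastI_ex[OF ex_in_conv[THEN iffD2]])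
  ultimately have "Inf ?M \<in> ?M" by simp
  then show ?thesis using that by (auto simp: motion_def)
qed

locale finite_simple_graph =
  fixes V :: "'a set" and E :: "'a \<Rightarrow> 'a \<Rightarrow> bool"
  assumes simple: "simple_graph V E"
begin

lemma finite_vertices: "finite V"
  using simple by (simp add: simple_graph_def)

lemma adj_in_vertices: "E u v \<Longrightarrow> u \<in> V \<and> v \<in> V"
  using simple by (simp add: simple_graph_def)

lemma adj_sym: "E u v \<Longrightarrow> E v u"
  using simple by (simp add: simple_graph_def)

lemma adj_irrefl: "\<not> E u u"
  using simple by (simp add: simple_graph_def)

lemma adj_commute: "E u v \<longleftrightarrow> E v u"
  using adj_sym by blast

definition neighbours :: "'a \<Rightarrow> 'a set" where
  "neighbours u = {v \<in> V. E u v}"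

lemma finite_neighbours: "finite (neighbours u)"
  using finite_vertices by (simp add: neighbours_def)

lemma bipartite_regular_sides_card_eq:
  fixes f :: "'a \<Rightarrow> bool"
  assumes bip: "\<forall>u\<in>V. \<forall>v\<in>V. E u v \<longrightarrow> f u \<noteq> f v"
    and regular: "\<And>u. u \<in> V \<Longrightarrow> card (neighbours u) = k" and "k > 0"
  shows "card {u \<in> V. f u} = card {u \<in> V. \<not> f u}"
proof -
  let ?A = "{u \<in> V. f u}" and ?B = "{u \<in> V. \<not> f u}"
  have edges_card: "card (SIGMA u:S. neighbours u) = card S * k" if "S \<subseteq> V" for S
  proof -
    have "finite S" using that finite_vertices by (rule finite_subset)
    then have "card (SIGMA u:S. neighbours u) = (\<Sum>u\<in>S. card (neighbours u))"
      by (simp add: finite_neighbours)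
    also have "\<dots> = card S * k" using that regular by (simp add: subset_iff)
    finally show ?thesis .
  qed
  have "(SIGMA u:?B. neighbours u) = (\<lambda>(u, v). (v, u)) ` (SIGMA u:?A. neighbours u)"
    using bip adj_in_vertices by (auto simp: image_iff neighbours_def adj_commute)
  then have "card (SIGMA u:?B. neighbours u) = card (SIGMA u:?A. neighbours u)"
    by (simp add: card_image swap_inj_on)
  then show ?thesis using edges_card[of ?A] edges_card[of ?B] \<open>k > 0\<close> by simp
qed

end

locale connected_simple_graph = finite_simple_graph +
  assumes connected: "connected_graph V E"
begin

abbreviation d :: "'a \<Rightarrow> 'a \<Rightarrow> nat" where
  "d \<equiv> gdist V E"

lemma shortest_walk:
  assumes "u \<in> V" "v \<in> V"
  obtains xs where "is_walk V E xs" "hd xs = u" "last xs = v" "length xs = Suc (d u v)"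
proof -
  obtain xs where xs: "is_walk V E xs" "hd xs = u" "last xs = v"
    using connected assms by (auto simp: connected_graph_def)
  then have "length xs = Suc (length xs - 1)" by (cases xs) (auto simp: is_walk_def)
  with xs have "\<exists>k ys. is_walk V E ys \<and> hd ys = u \<and> last ys = v \<and> length ys = Suc k"
    by blast
  then have "\<exists>ys. is_walk V E ys \<and> hd ys = u \<and> last ys = v \<and> length ys = Suc (d u v)"
    unfolding gdist_def by (rule LeastI_ex)
  with that show ?thesis by blast
qed

lemma gdist_le_walk:
  assumes "is_walk V E xs" "hd xs = u" "last xs = v"
  shows "d u v \<le> length xs - 1"
proof -
  have "length xs = Suc (length xs - 1)" using assms by (cases xs) (auto simp: is_walk_def)
  with assms show ?thesis unfolding gdist_def by (metis (mono_tags, lifting) Least_le)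
qed

lemma gdist_self [simp]: "u \<in> V \<Longrightarrow> d u u = 0"
  using gdist_le_walk[of "[u]" u u] by (simp add: is_walk_def)

lemma gdist_eq_0_iff:
  assumes "u \<in> V" "v \<in> V"
  shows "d u v = 0 \<longleftrightarrow> u = v"
proof
  assume "d u v = 0"
  obtain xs where "hd xs = u" "last xs = v" "length xs = Suc (d u v)"
    by (rule shortest_walk[OF assms])
  with \<open>d u v = 0\<close> show "u = v" by (cases xs) auto
qed (use assms in simp)

lemma gdist_adj_le: assumes "E w x" "u \<in> V" shows "d w u \<le> Suc (d x u)"
proof -
  have "x \<in> V" "w \<in> V" using adj_in_vertices assms by auto
  obtain xs where xs: "is_walk V E xs" "hd xs = x" "last xs = u" "length xs = Suc (d x u)"
    by (rule shortest_walk[OF \<open>x \<in> V\<close> assms(2)])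
  then have "is_walk V E (w # xs)"
    using assms \<open>w \<in> V\<close> by (cases xs) (auto simp: is_walk_iff_successively)
  from gdist_le_walk[OF this] show ?thesis using xs by (cases xs) auto
qed

lemma gdist_Suc_imp_neighbour:
  assumes "w \<in> V" "u \<in> V" "d w u = Suc i"
  obtains x where "E w x" "d x u = i"
proof -
  obtain xs where xs: "is_walk V E xs" "hd xs = w" "last xs = u" "length xs = Suc (d w u)"
    by (rule shortest_walk[OF assms(1,2)])
  then obtain x ys where xs_eq: "xs = w # x # ys"
    using assms(3) by (cases xs; cases "tl xs") auto
  then have walk: "is_walk V E (x # ys)" and "E w x"
    using xs by (auto simp: is_walk_iff_successively)
  have "last (x # ys) = u" "length ys = i" using xs xs_eq assms(3) by auto
  then have "d x u \<le> i" using gdist_le_walk[OF walk, of x u] by simp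
  moreover have "d w u \<le> Suc (d x u)" using gdist_adj_le \<open>E w x\<close> assms by blast
  ultimately show ?thesis using that \<open>E w x\<close> assms by simp
qed

lemma gdist_commute:
  assumes "u \<in> V" "v \<in> V"
  shows "d u v = d v u"
proof -
  have "d v u \<le> d u v" if uv: "u \<in> V" "v \<in> V" for u v
  proof -
    obtain xs where xs: "is_walk V E xs" "hd xs = u" "last xs = v" "length xs = Suc (d u v)"
      by (rule shortest_walk[OF uv])
    then have "is_walk V E (rev xs)"
      using adj_sym by (auto simp: is_walk_iff_successively elim!: successively_mono)
    then show ?thesis using gdist_le_walk[of "rev xs" v u] xs by (simp add: hd_rev last_rev)
  qed
  with assms show ?thesis by (simp add: le_antisym)
qed

lemma gdist_eq_1_iff:
  assumes "u \<in> V" "v \<in> V"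
  shows "d u v = 1 \<longleftrightarrow> E u v"
proof
  assume "d u v = 1"
  then show "E u v"
    using gdist_Suc_imp_neighbour[of u v 0] gdist_eq_0_iff assms adj_in_vertices by force
next
  assume "E u v"
  then have "d u v \<le> 1" using gdist_adj_le[of u v v] assms by simp
  moreover have "d u v \<noteq> 0" using gdist_eq_0_iff assms adj_irrefl \<open>E u v\<close> by blast
  ultimately show "d u v = 1" by simp
qed

lemma gdist_even_iff:
  fixes f :: "'a \<Rightarrow> bool"
  assumes "\<forall>u\<in>V. \<forall>v\<in>V. E u v \<longrightarrow> f u \<noteq> f v" "u \<in> V" "v \<in> V"
  shows "even (d u v) \<longleftrightarrow> f u = f v"
proof -
  obtain xs where "is_walk V E xs" "hd xs = u" "last xs = v" "length xs = Suc (d u v)"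
    by (rule shortest_walk[OF assms(2,3)])
  with successively_parity[of E xs V f] assms(1) show ?thesis
    by (simp add: is_walk_iff_successively)
qed

lemma automorphism_gdist:
  assumes "automorphism V E \<sigma>" "u \<in> V" "v \<in> V"
  shows "d (\<sigma> u) (\<sigma> v) = d u v"
proof -
  have le: "d (\<tau> u) (\<tau> v) \<le> d u v"
    if \<tau>: "automorphism V E \<tau>" and uv: "u \<in> V" "v \<in> V" for \<tau> u v
  proof -
    obtain xs where xs: "is_walk V E xs" "hd xs = u" "last xs = v" "length xs = Suc (d u v)"
      by (rule shortest_walk[OF uv])
    have "bij_betw \<tau> V V" "\<forall>u\<in>V. \<forall>v\<in>V. E (\<tau> u) (\<tau> v) \<longleftrightarrow> E u v"
      using \<tau> by (auto simp: automorphism_def)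
    then have "is_walk V E (map \<tau> xs)"
      using xs(1) by (auto simp: is_walk_iff_successively successively_map bij_betw_apply
          elim!: successively_mono)
    then show ?thesis using gdist_le_walk[of "map \<tau> xs"] xs by (cases xs) (auto simp: last_map)
  qed
  have "bij_betw \<sigma> V V" using assms by (simp add: automorphism_def)
  then have "inv_into V \<sigma> (\<sigma> u) = u" "inv_into V \<sigma> (\<sigma> v) = v" "\<sigma> u \<in> V" "\<sigma> v \<in> V"
    using assms by (auto simp: bij_betw_def)
  then have "d u v \<le> d (\<sigma> u) (\<sigma> v)"
    using le[OF automorphism_inv_into[OF assms(1)], of "\<sigma> u" "\<sigma> v"] by simp
  with le[OF assms] show ?thesis by simp
qed

lemma finite_gdist_values: "finite {d u v |u v. u \<in> V \<and> v \<in> V}"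
proof -
  have "{d u v |u v. u \<in> V \<and> v \<in> V} = (\<lambda>(u, v). d u v) ` (V \<times> V)" by auto
  then show ?thesis using finite_vertices by simp
qed

lemma gdist_le_diameter:
  assumes "u \<in> V" "v \<in> V"
  shows "d u v \<le> diameter V E"
proof -
  have "d u v \<in> {d u v |u v. u \<in> V \<and> v \<in> V}" using assms by blast
  then show ?thesis unfolding diameter_def by (rule Max_ge[OF finite_gdist_values])
qed

lemma diameter_attained: obtains p q where "p \<in> V" "q \<in> V" "d p q = diameter V E"
proof -
  have "V \<noteq> {}" using simple by (simp add: simple_graph_def)
  then have "{d u v |u v. u \<in> V \<and> v \<in> V} \<noteq> {}" by blast
  then have "diameter V E \<in> {d u v |u v. u \<in> V \<and> v \<in> V}"
    unfolding diameter_def by (rule Max_in[OF finite_gdist_values])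
  then obtain p q where "p \<in> V" "q \<in> V" "diameter V E = d p q" by auto
  then show ?thesis by (intro that) simp_all
qed

lemma connected_invariant:
  assumes "x \<in> V" "P x" "y \<in> V" and step: "\<And>a b. E a b \<Longrightarrow> P a \<Longrightarrow> P b"
  shows "P y"
proof -
  obtain xs where "is_walk V E xs" "hd xs = x" "last xs = y"
    using connected assms(1,3) by (auto simp: connected_graph_def)
  with successively_last_invariant[of E xs P] assms(2) step show ?thesis
    by (simp add: is_walk_iff_successively)
qed

text \<open>In a bipartite graph an automorphism with a fixed point preserves the sides, so every
  vertex is moved an even distance; if none is moved exactly two, the neighbours of a fixed
  vertex are fixed.\<close>
lemma automorphism_moves_some_vertex_by_2:
  fixes f :: "'a \<Rightarrow> bool"
  assumes bip: "\<forall>u\<in>V. \<forall>v\<in>V. E u v \<longrightarrow> f u \<noteq> f v"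
    and \<sigma>: "automorphism V E \<sigma>" and fixed: "x \<in> V" "\<sigma> x = x" and moved: "y \<in> V" "\<sigma> y \<noteq> y"
  shows "\<exists>u\<in>V. d u (\<sigma> u) = 2"
proof (rule ccontr)
  assume "\<not> (\<exists>u\<in>V. d u (\<sigma> u) = 2)"
  then have not_2: "d u (\<sigma> u) \<noteq> 2" if "u \<in> V" for u
    using that by blast
  have adj: "\<forall>u\<in>V. \<forall>v\<in>V. E (\<sigma> u) (\<sigma> v) \<longleftrightarrow> E u v"
    using \<sigma> by (simp add: automorphism_def)
  note \<sigma>_V = automorphism_in_vertices[OF \<sigma>]
  have even_move: "even (d u (\<sigma> u))" if "u \<in> V" for u
  proof -
    have "d x (\<sigma> u) = d x u" using automorphism_gdist[OF \<sigma> fixed(1) that] fixed by simp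
    then have "f u = f (\<sigma> u)"
      using gdist_even_iff[OF bip fixed(1) that] gdist_even_iff[OF bip fixed(1) \<sigma>_V[OF that]] by auto
    then show ?thesis using gdist_even_iff[OF bip that \<sigma>_V[OF that]] by simp
  qed
  have "\<sigma> b = b" if "E a b" "\<sigma> a = a" for a b
  proof -
    have V: "a \<in> V" "b \<in> V" using adj_in_vertices that(1) by auto
    then have "E a (\<sigma> b)" using adj[rule_format, OF V] that by simp
    then have "d a (\<sigma> b) = 1" using gdist_eq_1_iff V(1) \<sigma>_V[OF V(2)] by simp
    then have "d b (\<sigma> b) \<le> 2" using gdist_adj_le[OF adj_sym[OF that(1)] \<sigma>_V[OF V(2)]] by simp
    then have "d b (\<sigma> b) = 0"
      using even_move[OF V(2)] not_2[OF V(2)] by (auto simp: le_Suc_eq numeral_2_eq_2)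
    then show ?thesis using gdist_eq_0_iff[OF V(2) \<sigma>_V[OF V(2)]] by simp
  qed
  then have "\<sigma> y = y" using connected_invariant[of x "\<lambda>v. \<sigma> v = v" y] fixed moved(1) by simp
  with moved show False by simp
qed

end

locale distance_regular_graph = connected_simple_graph +
  fixes c b :: "nat \<Rightarrow> nat"
  assumes c_card: "\<And>v w. v \<in> V \<Longrightarrow> w \<in> V \<Longrightarrow>
      card {x \<in> V. E w x \<and> d v x + 1 = d v w} = c (d v w)"
    and b_card: "\<And>v w. v \<in> V \<Longrightarrow> w \<in> V \<Longrightarrow>
      card {x \<in> V. E w x \<and> d v x = d v w + 1} = b (d v w)"
begin

lemma card_neighbours:
  assumes "w \<in> V"
  shows "card (neighbours w) = b 0"
proof -
  have "{x \<in> V. E w x \<and> d w x = d w w + 1} = neighbours w"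
    using gdist_eq_1_iff assms by (auto simp: neighbours_def)
  then show ?thesis using b_card[OF assms assms] assms by simp
qed

lemma card_common_neighbours:
  assumes "v \<in> V" "w \<in> V" "d v w = 2"
  shows "card (neighbours v \<inter> neighbours w) = c 2"
proof -
  have "{x \<in> V. E w x \<and> d v x + 1 = d v w} = neighbours v \<inter> neighbours w"
    using assms gdist_eq_1_iff adj_commute by (auto simp: neighbours_def)
  then show ?thesis using c_card[OF assms(1,2)] assms(3) by simp
qed

lemma gdist_attained:
  assumes "i \<le> diameter V E"
  obtains p q where "p \<in> V" "q \<in> V" "d p q = i"
proof -
  have "\<exists>p\<in>V. \<exists>q\<in>V. d p q = diameter V E - m" if "m \<le> diameter V E" for m
    using that
  proof (induction m)
    case 0
    obtain p q where "p \<in> V" "q \<in> V" "d p q = diameter V E" by (rule diameter_attained)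
    then show ?case by auto
  next
    case (Suc m)
    then obtain p q where pq: "p \<in> V" "q \<in> V" "d p q = diameter V E - m" by auto
    then have "d q p = Suc (diameter V E - Suc m)" using Suc.prems gdist_commute by simp
    then obtain x where x: "E q x" "d x p = diameter V E - Suc m"
      by (rule gdist_Suc_imp_neighbour[OF pq(2,1)])
    then have "x \<in> V" "d p x = diameter V E - Suc m"
      using adj_in_vertices gdist_commute pq(1) by auto
    with pq(1) show ?case by blast
  qed
  from this[of "diameter V E - i"] assms that show ?thesis by auto
qed

lemma b_pos:
  assumes "i < diameter V E"
  shows "0 < b i"
proof -
  have "Suc i \<le> diameter V E" using assms by simp
  then obtain p q where pq: "p \<in> V" "q \<in> V" "d p q = Suc i" by (rule gdist_attained)
  then have "d q p = Suc i" using gdist_commute by simp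
  then obtain w where w: "E q w" "d w p = i" by (rule gdist_Suc_imp_neighbour[OF pq(2,1)])
  then have "w \<in> V" and dw: "d p w = i" using adj_in_vertices gdist_commute pq(1) by auto
  moreover have "q \<in> {x \<in> V. E w x \<and> d p x = d p w + 1}"
    using w pq dw adj_sym by auto
  then have "0 < card {x \<in> V. E w x \<and> d p x = d p w + 1}"
    using finite_vertices by (auto simp: card_gt_0_iff)
  ultimately show ?thesis using b_card[OF pq(1) \<open>w \<in> V\<close>] dw by simp
qed

lemma exists_neighbour_farther:
  assumes "u \<in> V" "y \<in> V" "d u y < diameter V E"
  obtains z where "E y z" "d u z = d u y + 1"
proof -
  have "card {x \<in> V. E y x \<and> d u x = d u y + 1} > 0"
    using b_card[OF assms(1,2)] b_pos[OF assms(3)] by simp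
  then obtain z where "E y z" "d u z = d u y + 1" by (auto simp: card_gt_0_iff)
  then show ?thesis by (rule that)
qed

lemma exists_at_gdist:
  assumes "u \<in> V" "i \<le> diameter V E"
  obtains x where "x \<in> V" "d u x = i"
proof -
  have "\<exists>x\<in>V. d u x = i" using assms(2)
  proof (induction i)
    case 0
    show ?case using assms(1) by (intro bexI[of _ u]) simp_all
  next
    case (Suc i)
    then obtain x where x: "x \<in> V" "d u x = i" by auto
    with Suc.prems obtain z where "E x z" "d u z = Suc i"
      by (elim exists_neighbour_farther[OF assms(1)]) simp_all
    then show ?case using adj_in_vertices by blast
  qed
  with that show ?thesis by blast
qed

end

locale bipartite_antipodal_drg4 = distance_regular_graph +
  fixes f :: "'a \<Rightarrow> bool"
  assumes bipartition: "\<forall>u\<in>V. \<forall>v\<in>V. E u v \<longrightarrow> f u \<noteq> f v"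
    and diameter_eq_4: "diameter V E = 4"
    and antipodal: "antipodal V E"
begin

definition antipodal_class :: "'a \<Rightarrow> 'a set" where
  "antipodal_class u = {v \<in> V. v = u \<or> d u v = 4}"

lemma gdist_le_4: "u \<in> V \<Longrightarrow> v \<in> V \<Longrightarrow> d u v \<le> 4"
  using gdist_le_diameter diameter_eq_4 by metis

lemma same_side_iff: "u \<in> V \<Longrightarrow> v \<in> V \<Longrightarrow> f u = f v \<longleftrightarrow> even (d u v)"
  using gdist_even_iff[OF bipartition] by simp

lemma antipodal_class_subset: "antipodal_class u \<subseteq> V"
  by (auto simp: antipodal_class_def)

lemma finite_antipodal_class: "finite (antipodal_class u)"
  using antipodal_class_subset finite_vertices by (rule finite_subset)

lemma self_in_antipodal_class: "u \<in> V \<Longrightarrow> u \<in> antipodal_class u"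
  by (simp add: antipodal_class_def)

lemma antipodal_class_sym:
  "u \<in> V \<Longrightarrow> v \<in> antipodal_class u \<Longrightarrow> u \<in> antipodal_class v"
  using gdist_commute by (auto simp: antipodal_class_def)

lemma antipodal_class_trans:
  assumes "u \<in> V" "v \<in> antipodal_class u" "w \<in> antipodal_class v"
  shows "w \<in> antipodal_class u"
proof -
  let ?R = "{(u, v). u \<in> V \<and> v \<in> V \<and> (u = v \<or> gdist V E u v = diameter V E)}"
  have "trans ?R" using antipodal by (simp add: antipodal_def equiv_def)
  moreover have "(u, v) \<in> ?R" "(v, w) \<in> ?R"
    using assms diameter_eq_4 by (auto simp: antipodal_class_def)
  ultimately have "(u, w) \<in> ?R" by (rule transD)
  then show ?thesis using diameter_eq_4 by (auto simp: antipodal_class_def)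
qed

lemma antipodal_class_same_side: "u \<in> V \<Longrightarrow> v \<in> antipodal_class u \<Longrightarrow> f v = f u"
  using same_side_iff[of u v] by (auto simp: antipodal_class_def)

lemma automorphism_antipodal_class:
  assumes "automorphism V E \<sigma>" "u \<in> V" "v \<in> antipodal_class u"
  shows "\<sigma> v \<in> antipodal_class (\<sigma> u)"
proof -
  have "v \<in> V" using assms(3) by (simp add: antipodal_class_def)
  then show ?thesis
    using assms automorphism_gdist[OF assms(1,2)] automorphism_in_vertices[OF assms(1)]
    by (auto simp: antipodal_class_def)
qed

lemma gdist_eq_2I:
  assumes "u \<in> V" "v \<in> V" "f u = f v" "v \<notin> antipodal_class u"
  shows "d u v = 2"
proof -
  have "even (d u v)" using same_side_iff assms(1-3) by simp
  moreover have "d u v \<noteq> 0" "d u v \<noteq> 4"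
    using assms gdist_eq_0_iff by (auto simp: antipodal_class_def)
  moreover have "d u v \<le> 4" using gdist_le_4 assms(1,2) .
  moreover have "\<And>n :: nat. even n \<Longrightarrow> n \<noteq> 0 \<Longrightarrow> n \<noteq> 4 \<Longrightarrow> n \<le> 4 \<Longrightarrow> n = 2"
    by presburger
  ultimately show ?thesis by blast
qed

text \<open>Distinct antipodal vertices are at distance 4, so they have no common neighbour.\<close>
lemma antipodal_class_neighbours_disjoint:
  assumes "u \<in> V" "a \<in> antipodal_class u" "a' \<in> antipodal_class u" "a \<noteq> a'"
  shows "neighbours a \<inter> neighbours a' = {}"
proof -
  have V: "a \<in> V" "a' \<in> V" using assms antipodal_class_subset by auto
  have "a' \<in> antipodal_class a"
    using antipodal_class_trans[OF V(1) antipodal_class_sym[OF assms(1,2)] assms(3)] .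
  then have far: "d a a' = 4" using assms(4) by (simp add: antipodal_class_def)
  show ?thesis
  proof (rule ccontr)
    assume "neighbours a \<inter> neighbours a' \<noteq> {}"
    then obtain y where "E a y" "E a' y" by (auto simp: neighbours_def)
    then have "d a a' \<le> Suc (d y a')" "d y a' = 1"
      using gdist_adj_le gdist_eq_1_iff adj_in_vertices adj_sym by (auto simp: V)
    with far show False by simp
  qed
qed

text \<open>A vertex on the other side is at distance 1 or 3 from u; in the second case it has a
  neighbour antipodal to u.\<close>
lemma opposite_side_subset_antipodal_neighbours:
  assumes "u \<in> V"
  shows "{y \<in> V. f y \<noteq> f u} \<subseteq> (\<Union>a\<in>antipodal_class u. neighbours a)"
proof
  fix y assume "y \<in> {y \<in> V. f y \<noteq> f u}"
  then have y: "y \<in> V" "odd (d u y)" using same_side_iff assms by auto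
  moreover have "d u y \<le> 4" using gdist_le_4 assms y by simp
  moreover have "\<And>n :: nat. odd n \<Longrightarrow> n \<le> 4 \<Longrightarrow> n = 1 \<or> n = 3" by presburger
  ultimately consider (adjacent) "d u y = 1" | (distance_3) "d u y = 3" by blast
  then show "y \<in> (\<Union>a\<in>antipodal_class u. neighbours a)"
  proof cases
    case adjacent
    then have "E u y" using gdist_eq_1_iff assms y by simp
    then show ?thesis
      using self_in_antipodal_class assms y by (auto simp: neighbours_def)
  next
    case distance_3
    then obtain a where "E y a" "d u a = 4"
      using exists_neighbour_farther[OF assms y(1)] diameter_eq_4 by auto
    then have "a \<in> antipodal_class u" "y \<in> neighbours a"
      using adj_in_vertices adj_sym by (auto simp: neighbours_def antipodal_class_def)
    then show ?thesis by blast
  qed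
qed

lemma card_vertices_le:
  assumes "u \<in> V"
  shows "card V \<le> 2 * (card (antipodal_class u) * b 0)"
proof -
  let ?B = "{y \<in> V. f y \<noteq> f u}" and ?A = "{y \<in> V. \<not> (f y \<noteq> f u)}"
  have "card ?B \<le> card (\<Union>a\<in>antipodal_class u. neighbours a)"
    using opposite_side_subset_antipodal_neighbours[OF assms] finite_antipodal_class finite_neighbours
    by (intro card_mono) auto
  also have "\<dots> \<le> (\<Sum>a\<in>antipodal_class u. card (neighbours a))"
    by (rule card_UN_le[OF finite_antipodal_class])
  also have "\<dots> = card (antipodal_class u) * b 0"
    using antipodal_class_subset card_neighbours by (simp add: subset_iff)
  finally have B_le: "card ?B \<le> card (antipodal_class u) * b 0" .
  have "card ?B = card ?A"
    using bipartition card_neighbours b_pos[of 0] diameter_eq_4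
    by (intro bipartite_regular_sides_card_eq) auto
  moreover have "card (?B \<union> ?A) = card ?B + card ?A"
    using finite_vertices by (intro card_Un_disjoint) auto
  moreover have "?B \<union> ?A = V" by auto
  ultimately show ?thesis using B_le by simp
qed

lemma two_c2_le_b0: "2 * c 2 \<le> b 0"
proof -
  obtain u where u: "u \<in> V" using simple by (auto simp: simple_graph_def)
  have "2 \<le> diameter V E" using diameter_eq_4 by simp
  then obtain p where p: "p \<in> V" "d u p = 2" by (rule exists_at_gdist[OF u])
  obtain u' where u': "u' \<in> V" "d u u' = 4"
    using exists_at_gdist[OF u, of 4] diameter_eq_4 by auto
  have u'_class: "u' \<in> antipodal_class u" using u' by (simp add: antipodal_class_def)
  have "p \<notin> antipodal_class u'"
  proof
    assume "p \<in> antipodal_class u'"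
    then have "p \<in> antipodal_class u" using antipodal_class_trans[OF u u'_class] by blast
    with p u show False by (auto simp: antipodal_class_def)
  qed
  moreover have "f u' = f p"
    using antipodal_class_same_side[OF u u'_class] same_side_iff[OF u p(1)] p(2) by simp
  ultimately have "d u' p = 2" using gdist_eq_2I u'(1) p(1) by blast
  have disjoint: "neighbours u \<inter> neighbours u' = {}"
    using antipodal_class_neighbours_disjoint[OF u self_in_antipodal_class[OF u] u'_class] u u'
    by fastforce
  have "2 * c 2 = card (neighbours p \<inter> neighbours u) + card (neighbours p \<inter> neighbours u')"
    using card_common_neighbours p u u' \<open>d u' p = 2\<close> gdist_commute by simp
  also have "\<dots> = card ((neighbours p \<inter> neighbours u) \<union> (neighbours p \<inter> neighbours u'))"
    using disjoint finite_neighbours by (intro card_Un_disjoint[symmetric]) auto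
  also have "\<dots> \<le> card (neighbours p)"
    using finite_neighbours by (intro card_mono) auto
  finally show ?thesis using card_neighbours[OF p(1)] by simp
qed

text \<open>The class of u is mapped to the class of \<sigma> u, which is a different class; a vertex of
  the class and its image lie on the same side, so their distance is even, nonzero and not 4.\<close>
lemma antipodal_class_moved_by_2:
  assumes \<sigma>: "automorphism V E \<sigma>" and u: "u \<in> V" "d u (\<sigma> u) = 2"
    and a: "a \<in> antipodal_class u"
  shows "d a (\<sigma> a) = 2"
proof -
  note \<sigma>_V = automorphism_in_vertices[OF \<sigma>]
  have aV: "a \<in> V" using a antipodal_class_subset by auto
  have \<sigma>a: "\<sigma> a \<in> antipodal_class (\<sigma> u)" using automorphism_antipodal_class[OF \<sigma> u(1) a] .
  have "f a = f u" using antipodal_class_same_side[OF u(1) a] .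
  moreover have "f (\<sigma> a) = f (\<sigma> u)" using antipodal_class_same_side[OF \<sigma>_V[OF u(1)] \<sigma>a] .
  moreover have "f (\<sigma> u) = f u" using same_side_iff[OF u(1) \<sigma>_V[OF u(1)]] u(2) by simp
  moreover have "\<sigma> a \<notin> antipodal_class a"
  proof
    assume "\<sigma> a \<in> antipodal_class a"
    then have "\<sigma> a \<in> antipodal_class u" using antipodal_class_trans[OF u(1) a] by blast
    moreover have "\<sigma> u \<in> antipodal_class (\<sigma> a)"
      using antipodal_class_sym[OF \<sigma>_V[OF u(1)] \<sigma>a] .
    ultimately have "\<sigma> u \<in> antipodal_class u" using antipodal_class_trans[OF u(1)] by blast
    with u show False by (auto simp: antipodal_class_def)
  qed
  ultimately show ?thesis using gdist_eq_2I aV \<sigma>_V[OF aV] by simp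
qed

lemma card_moved_ge:
  assumes \<sigma>: "automorphism V E \<sigma>" and u: "u \<in> V" "d u (\<sigma> u) = 2"
  shows "card (antipodal_class u) * (b 0 - c 2) \<le> card {x \<in> V. \<sigma> x \<noteq> x}"
proof -
  define D where "D a = neighbours a - neighbours (\<sigma> a)" for a
  note \<sigma>_V = automorphism_in_vertices[OF \<sigma>]
  have card_D: "card (D a) = b 0 - c 2" if a: "a \<in> antipodal_class u" for a
  proof -
    have aV: "a \<in> V" using a antipodal_class_subset by auto
    have "card (neighbours a \<inter> neighbours (\<sigma> a)) = c 2"
      using card_common_neighbours[OF aV \<sigma>_V[OF aV] antipodal_class_moved_by_2[OF \<sigma> u a]] .
    then show ?thesis
      using card_Diff_subset_Int[of "neighbours a" "neighbours (\<sigma> a)"] finite_neighbours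
        card_neighbours[OF aV] by (simp add: D_def)
  qed
  have D_moved: "D a \<subseteq> {x \<in> V. \<sigma> x \<noteq> x}" if "a \<in> antipodal_class u" for a
  proof
    fix y assume y: "y \<in> D a"
    then have V: "a \<in> V" "y \<in> V" and "E a y" "\<not> E (\<sigma> a) y"
      using adj_in_vertices by (auto simp: D_def neighbours_def)
    moreover have "E (\<sigma> a) (\<sigma> y) \<longleftrightarrow> E a y"
      using \<sigma> V by (simp add: automorphism_def)
    ultimately show "y \<in> {x \<in> V. \<sigma> x \<noteq> x}" by auto
  qed
  have D_disjoint: "D a \<inter> D a' = {}"
    if "a \<in> antipodal_class u" "a' \<in> antipodal_class u" "a \<noteq> a'" for a a'
    using antipodal_class_neighbours_disjoint[OF u(1) that] by (auto simp: D_def)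
  have "card (antipodal_class u) * (b 0 - c 2) = (\<Sum>a\<in>antipodal_class u. card (D a))"
    using card_D by simp
  also have "\<dots> = card (\<Union>a\<in>antipodal_class u. D a)"
    using finite_antipodal_class finite_neighbours D_disjoint
    by (intro card_UN_disjoint[symmetric]) (simp_all add: D_def)
  also have "\<dots> \<le> card {x \<in> V. \<sigma> x \<noteq> x}"
    using D_moved finite_vertices by (intro card_mono) auto
  finally show ?thesis .
qed

lemma card_vertices_le_4_card_moved:
  assumes \<sigma>: "automorphism V E \<sigma>" and moved: "y \<in> V" "\<sigma> y \<noteq> y"
  shows "card V \<le> 4 * card {x \<in> V. \<sigma> x \<noteq> x}"
proof (cases "\<exists>x\<in>V. \<sigma> x = x")
  case True
  then obtain x where "x \<in> V" "\<sigma> x = x" by blast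
  then obtain u where u: "u \<in> V" "d u (\<sigma> u) = 2"
    using automorphism_moves_some_vertex_by_2[OF bipartition \<sigma> _ _ moved] by blast
  have "card V \<le> 2 * (card (antipodal_class u) * b 0)" using card_vertices_le[OF u(1)] .
  also have "\<dots> \<le> 4 * (card (antipodal_class u) * (b 0 - c 2))"
  proof -
    have "b 0 \<le> 2 * (b 0 - c 2)" using two_c2_le_b0 by simp
    from mult_le_mono2[OF this, of "2 * card (antipodal_class u)"] show ?thesis
      by (simp add: ac_simps)
  qed
  also have "\<dots> \<le> 4 * card {x \<in> V. \<sigma> x \<noteq> x}" using card_moved_ge[OF \<sigma> u] by simp
  finally show ?thesis .
next
  case False
  then have "{x \<in> V. \<sigma> x \<noteq> x} = V" by auto
  then show ?thesis by simp
qed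

lemma card_vertices_le_4_motion: "enat (card V) \<le> 4 * motion V E"
proof (cases "\<exists>\<sigma> x. automorphism V E \<sigma> \<and> x \<in> V \<and> \<sigma> x \<noteq> x")
  case True
  then obtain \<sigma> where "automorphism V E \<sigma>" "\<exists>x\<in>V. \<sigma> x \<noteq> x"
    and motion: "motion V E = enat (card {x \<in> V. \<sigma> x \<noteq> x})"
    by (blast elim: motion_attained)
  then have "card V \<le> 4 * card {x \<in> V. \<sigma> x \<noteq> x}"
    using card_vertices_le_4_card_moved by blast
  then show ?thesis by (simp add: motion numeral_eq_enat)
next
  case False
  then have no_aut: "{\<sigma>. automorphism V E \<sigma> \<and> (\<exists>x\<in>V. \<sigma> x \<noteq> x)} = {}" by blast
  have "motion V E = \<infinity>"
    unfolding motion_def by (simp only: no_aut image_empty Inf_empty top_enat_def)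
  then show ?thesis by (simp add: numeral_eq_enat)
qed

end

lemma bipartite_antipodal_drg4I:
  assumes "distance_regular V E" "diameter V E = 4" "bipartite V E" "antipodal V E"
  obtains c b f where "bipartite_antipodal_drg4 V E c b f"
proof -
  obtain c a b :: "nat \<Rightarrow> nat" where "simple_graph V E" "connected_graph V E"
    and cab: "\<forall>v\<in>V. \<forall>w\<in>V.
        card {x \<in> V. E w x \<and> gdist V E v x + 1 = gdist V E v w} = c (gdist V E v w) \<and>
        card {x \<in> V. E w x \<and> gdist V E v x = gdist V E v w} = a (gdist V E v w) \<and>
        card {x \<in> V. E w x \<and> gdist V E v x = gdist V E v w + 1} = b (gdist V E v w)"
    using assms(1) unfolding distance_regular_def by blast
  moreover obtain f :: "'a \<Rightarrow> bool" where "\<forall>u\<in>V. \<forall>v\<in>V. E u v \<longrightarrow> f u \<noteq> f v"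
    using assms(3) unfolding bipartite_def by blast
  ultimately have "bipartite_antipodal_drg4 V E c b f"
    using assms(2,4) by unfold_locales (simp_all add: cab)
  then show ?thesis by (rule that)
qed

theorem proposition5p6:
  fixes V :: "'a set" and E :: "'a \<Rightarrow> 'a \<Rightarrow> bool" and n :: nat
  assumes "distance_regular V E"
    and "diameter V E = 4"
    and "bipartite V E"
    and "antipodal V E"
    and "n = card V"
  shows "3 * enat n \<le> 20 * motion V E"
proof -
  obtain c b f where "bipartite_antipodal_drg4 V E c b f"
    using assms(1-4) by (rule bipartite_antipodal_drg4I)
  then interpret bipartite_antipodal_drg4 V E c b f .
  have "enat n \<le> 4 * motion V E" using card_vertices_le_4_motion assms(5) by simp
  then show ?thesis by (cases "motion V E") (auto simp: numeral_eq_enat)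
qed

end
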